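(* Let $k:(0,\infty)\to(0,\infty)$ be $C^1$, $K(X):=k(|X|)|X|^{-1}X$ for $X\in\mathbb{R}^N\setminus\{0\}$, $b(t):=k'(t)t/k(t)$, and let $X:\Omega\to\mathbb{R}^N\setminus\{0\}$ be $C^1$ on an open $\Omega\subset\mathbb{R}^n$. Let $A$ be a real $N\times N$ matrix and $0<\lambda\le\Lambda$ such that $\langle A\chi,\chi\rangle\ge\lambda|\chi|^2$ and $|A\chi|\le\Lambda|\chi|$ for all $\chi\in\mathbb{R}^{N\times n}$. Put $\kappa=\lambda/\Lambda^2$, $\nu=\lambda/\Lambda$. At every point where $b:=b(|X|)>0$, $$\langle\kappa A\,DX,D(K(X))\rangle\ge\big(\alpha^{1/2}-(1-\nu^2)^{1/2}\big)|DX||D(K(X))|,\qquad\alpha=1-\Big(\frac{b-1}{b+1}\Big)^2 .$$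
   Context: $DX$ denotes the $N\times n$ Jacobian matrix of $X$; for $\chi\in\mathbb{R}^{N\times n}$, $A\chi$ is the matrix product; for $N\times n$ matrices $P,Q$, $\langle P,Q\rangle=\sum_{a,j}P_{aj}Q_{aj}$ and $|P|=\langle P,P\rangle^{1/2}$. *)

theory Defs
  imports "HOL-Analysis.Analysis"
begin

text \<open>Frobenius inner product and norm on N x n matrices (type real^'n^'N: rows indexed by 'N).\<close>
definition frob_inner :: "real^'n^'m \<Rightarrow> real^'n^'m \<Rightarrow> real" where
  "frob_inner P Q = (\<Sum>a\<in>UNIV. \<Sum>j\<in>UNIV. P $ a $ j * Q $ a $ j)"

definition frob_norm :: "real^'n^'m \<Rightarrow> real" where
  "frob_norm P = sqrt (frob_inner P P)"

definition Kmap :: "(real \<Rightarrow> real) \<Rightarrow> real^'N \<Rightarrow> real^'N" where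
  "Kmap k X = (k (norm X) / norm X) *\<^sub>R X"

definition bfun :: "(real \<Rightarrow> real) \<Rightarrow> (real \<Rightarrow> real) \<Rightarrow> real \<Rightarrow> real" where
  "bfun k k' t = k' t * t / k t"

end

theory Submission
  imports Defs
begin

text \<open>
  With \<open>e = X/|X|\<close>, the chain rule gives \<open>D(K(X)) = (k(|X|)/|X|) (DX + (b - 1) E)\<close>, where
  \<open>E = e e\<^sup>T DX\<close> is the orthogonal projection of \<open>DX\<close> onto the matrices with range along \<open>e\<close>.
  For \<open>Q = P + (b - 1) E\<close> one has \<open>(b + 1) \<langle>P,Q\<rangle> = |Q|\<^sup>2 + b |P|\<^sup>2 \<ge> 2 \<surd>b |P| |Q|\<close>, and
  \<open>2 \<surd>b / (b + 1) = \<surd>\<alpha>\<close>.  Finally ellipticity and boundedness of \<open>A\<close> give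
  \<open>|\<kappa> A P - P|\<^sup>2 \<le> (1 - \<nu>\<^sup>2) |P|\<^sup>2\<close>, so replacing \<open>P\<close> by \<open>\<kappa> A P\<close> costs at most
  \<open>\<surd>(1 - \<nu>\<^sup>2) |P| |Q|\<close> by Cauchy-Schwarz.
\<close>

lemma frob_inner_eq_inner: "frob_inner P Q = P \<bullet> Q"
  by (simp add: frob_inner_def inner_vec_def)

lemma frob_norm_eq_norm: "frob_norm P = norm P"
  by (simp add: frob_norm_def frob_inner_eq_inner norm_eq_sqrt_inner)

lemma sqrt_one_minus_square_ratio:
  fixes b :: real
  assumes "b > 0"
  shows "sqrt (1 - ((b - 1) / (b + 1))\<^sup>2) = 2 * sqrt b / (b + 1)"
proof -
  have "1 - ((b - 1) / (b + 1))\<^sup>2 = (2 * sqrt b / (b + 1))\<^sup>2"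
    using assms by (simp add: power_divide power_mult_distrib field_simps)
      (simp add: power2_eq_square algebra_simps)
  then show ?thesis
    using assms by simp
qed

lemma inner_ge_add_projection:
  fixes P E :: "'a::real_inner"
  assumes proj: "E \<bullet> P = E \<bullet> E" and b: "b > 0"
  shows "2 * sqrt b / (b + 1) * (norm P * norm (P + (b - 1) *\<^sub>R E))
           \<le> P \<bullet> (P + (b - 1) *\<^sub>R E)"
proof -
  define Q where "Q = P + (b - 1) *\<^sub>R E"
  have identity: "(b + 1) * (P \<bullet> Q) = Q \<bullet> Q + b * (P \<bullet> P)"
    unfolding Q_def
    by (simp add: inner_add_left inner_add_right inner_commute proj power2_eq_square algebra_simps)
  have "0 \<le> (norm Q - sqrt b * norm P)\<^sup>2"
    by simp
  also have "\<dots> = Q \<bullet> Q + b * (P \<bullet> P) - 2 * sqrt b * (norm P * norm Q)"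
    using b by (simp add: power2_eq_square algebra_simps flip: power2_norm_eq_inner)
  finally have "2 * sqrt b * (norm P * norm Q) \<le> (b + 1) * (P \<bullet> Q)"
    using identity by linarith
  then show ?thesis
    using b by (simp add: Q_def pos_divide_le_eq mult_ac)
qed

lemma norm_scaled_minus_le:
  fixes V P :: "'a::real_inner"
  assumes ell: "V \<bullet> P \<ge> lam * (norm P)\<^sup>2" and bdd: "norm V \<le> Lam * norm P"
    and lam: "0 < lam" "lam \<le> Lam"
  shows "norm ((lam / Lam\<^sup>2) *\<^sub>R V - P) \<le> sqrt (1 - (lam / Lam)\<^sup>2) * norm P"
proof -
  define \<kappa> where "\<kappa> = lam / Lam\<^sup>2"
  have Lam: "Lam > 0" and \<kappa>: "\<kappa> \<ge> 0"
    using lam by (auto simp: \<kappa>_def)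
  have "(norm (\<kappa> *\<^sub>R V - P))\<^sup>2 = \<kappa>\<^sup>2 * (norm V)\<^sup>2 - 2 * \<kappa> * (V \<bullet> P) + (norm P)\<^sup>2"
    by (simp only: power2_norm_eq_inner)
      (simp add: inner_diff_left inner_diff_right inner_commute power2_eq_square algebra_simps)
  also have "\<dots> \<le> \<kappa>\<^sup>2 * (Lam * norm P)\<^sup>2 - 2 * \<kappa> * (lam * (norm P)\<^sup>2) + (norm P)\<^sup>2"
    using mult_left_mono[OF power_mono[OF bdd norm_ge_zero, of 2], of "\<kappa>\<^sup>2"]
      mult_left_mono[OF ell, of "2 * \<kappa>"] \<kappa>
    by simp
  also have "\<dots> = (1 - (lam / Lam)\<^sup>2) * (norm P)\<^sup>2"
    using Lam by (simp add: \<kappa>_def power2_eq_square field_simps)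
  finally have "norm (\<kappa> *\<^sub>R V - P) \<le> sqrt ((1 - (lam / Lam)\<^sup>2) * (norm P)\<^sup>2)"
    by (simp add: real_le_rsqrt)
  then show ?thesis
    by (simp add: \<kappa>_def real_sqrt_mult)
qed

lemma inner_scaled_ge:
  fixes V P Q :: "'a::real_inner"
  assumes "V \<bullet> P \<ge> lam * (norm P)\<^sup>2" "norm V \<le> Lam * norm P" "0 < lam" "lam \<le> Lam"
  shows "((lam / Lam\<^sup>2) *\<^sub>R V) \<bullet> Q \<ge> P \<bullet> Q - sqrt (1 - (lam / Lam)\<^sup>2) * norm P * norm Q"
proof -
  define R where "R = (lam / Lam\<^sup>2) *\<^sub>R V - P"
  have "\<bar>R \<bullet> Q\<bar> \<le> sqrt (1 - (lam / Lam)\<^sup>2) * norm P * norm Q"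
    using Cauchy_Schwarz_ineq2[of R Q]
      mult_right_mono[OF norm_scaled_minus_le[OF assms] norm_ge_zero[of Q]]
    unfolding R_def by linarith
  moreover have "((lam / Lam\<^sup>2) *\<^sub>R V) \<bullet> Q = P \<bullet> Q + R \<bullet> Q"
    by (simp add: R_def inner_diff_left)
  ultimately show ?thesis
    by linarith
qed

lemma has_derivative_Kmap:
  fixes Y :: "real^'N"
  assumes Y: "Y \<noteq> 0" and k: "(k has_real_derivative d) (at (norm Y))"
  shows "(Kmap k has_derivative
     (\<lambda>v. (k (norm Y) / norm Y) *\<^sub>R v + ((d - k (norm Y) / norm Y) * (sgn Y \<bullet> v)) *\<^sub>R sgn Y)) (at Y)"
proof -
  let ?r = "norm Y"
  have r: "?r \<noteq> 0"
    using Y by simp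
  have "((\<lambda>t. k t / t) has_derivative (\<lambda>u. (d * ?r - k ?r) / (?r * ?r) * u)) (at ?r)"
    using DERIV_divide[OF k DERIV_ident r] by (simp only: has_field_derivative_def mult_1_right)
  from diff_chain_at[OF has_derivative_norm[OF Y] this]
  have "((\<lambda>Z. k (norm Z) / norm Z) has_derivative
      (\<lambda>v. (d * ?r - k ?r) / (?r * ?r) * (sgn Y \<bullet> v))) (at Y)"
    by (simp add: o_def inner_commute)
  from has_derivative_scaleR[OF this has_derivative_ident]
  show ?thesis
    unfolding Kmap_def[abs_def]
    by (rule has_derivative_eq_rhs) (use r in \<open>simp add: sgn_div_norm field_simps\<close>)
qed

definition proj_along :: "real^'N \<Rightarrow> real^'n^'N \<Rightarrow> real^'n^'N" where
  "proj_along e P = (\<chi> i. e $ i *\<^sub>R (e v* P))"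

lemma inner_proj_along:
  assumes "norm e = 1"
  shows "proj_along e P \<bullet> P = proj_along e P \<bullet> proj_along e P"
proof -
  have e: "(\<Sum>i\<in>UNIV. e $ i * e $ i) = 1"
    using assms by (simp add: norm_eq_1 inner_vec_def)
  have "proj_along e P \<bullet> P = (e v* P) \<bullet> (e v* P)"
    by (simp add: proj_along_def inner_vec_def vector_matrix_mult_def sum_distrib_left
        sum_distrib_right mult_ac) (subst sum.swap, simp)
  also have "\<dots> = proj_along e P \<bullet> proj_along e P"
    unfolding proj_along_def inner_vec_def[of "\<chi> i. e $ i *\<^sub>R (e v* P)"]
    by (simp add: mult.assoc[symmetric] e flip: sum_distrib_right)
  finally show ?thesis .
qed

lemma jacobian_Kmap_comp:
  fixes X :: "real^'n \<Rightarrow> real^'N"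
  assumes X: "X differentiable (at x)" "X x \<noteq> 0"
    and k: "(k has_real_derivative d) (at (norm (X x)))"
  defines "g \<equiv> k (norm (X x)) / norm (X x)"
  shows "jacobian (\<lambda>y. Kmap k (X y)) (at x)
           = g *\<^sub>R jacobian X (at x) + (d - g) *\<^sub>R proj_along (sgn (X x)) (jacobian X (at x))"
proof -
  define DX where "DX = frechet_derivative X (at x)"
  have "(X has_derivative DX) (at x)"
    using X by (simp add: DX_def frechet_derivative_works)
  from diff_chain_at[OF this has_derivative_Kmap[OF X(2) k]]
  have "frechet_derivative (\<lambda>y. Kmap k (X y)) (at x)
          = (\<lambda>v. g *\<^sub>R v + ((d - g) * (sgn (X x) \<bullet> v)) *\<^sub>R sgn (X x)) \<circ> DX"
    by (simp add: frechet_derivative_at[symmetric] o_def g_def)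
  moreover have "DX (axis j 1) = (\<chi> i. jacobian X (at x) $ i $ j)" for j
    by (simp add: DX_def jacobian_def matrix_def vec_eq_iff)
  ultimately show ?thesis
    by (simp add: jacobian_def[of "\<lambda>y. Kmap k (X y)"] matrix_def vec_eq_iff proj_along_def
        vector_matrix_mult_def inner_vec_def mult_ac)
qed

theorem lemma6p3:
  fixes k k' :: "real \<Rightarrow> real"
    and X :: "real^'n \<Rightarrow> real^'N"
    and \<Omega> :: "(real^'n) set"
    and A :: "real^'N^'N"
    and lam Lam :: real
    and x :: "real^'n"
  assumes k_pos: "\<And>t. t > 0 \<Longrightarrow> k t > 0"
    and k_deriv: "\<And>t. t > 0 \<Longrightarrow> (k has_real_derivative k' t) (at t)"
    and k'_cont: "continuous_on {0<..} k'"
    and \<Omega>_open: "open \<Omega>"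
    and X_nz: "\<And>y. y \<in> \<Omega> \<Longrightarrow> X y \<noteq> 0"
    and X_diff: "\<And>y. y \<in> \<Omega> \<Longrightarrow> X differentiable (at y)"
    and X_C1: "continuous_on \<Omega> (\<lambda>y. jacobian X (at y))"
    and lam_pos: "0 < lam" and lam_le: "lam \<le> Lam"
    and A_ell: "\<And>C::real^'n^'N. frob_inner (A ** C) C \<ge> lam * (frob_norm C)\<^sup>2"
    and A_bdd: "\<And>C::real^'n^'N. frob_norm (A ** C) \<le> Lam * frob_norm C"
    and x_in: "x \<in> \<Omega>"
    and b_pos: "bfun k k' (norm (X x)) > 0"
  shows "frob_inner (((lam / Lam\<^sup>2) *\<^sub>R A) ** jacobian X (at x))
                    (jacobian (\<lambda>y. Kmap k (X y)) (at x))
         \<ge> (sqrt (1 - ((bfun k k' (norm (X x)) - 1) / (bfun k k' (norm (X x)) + 1))\<^sup>2)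
             - sqrt (1 - (lam / Lam)\<^sup>2))
           * frob_norm (jacobian X (at x)) * frob_norm (jacobian (\<lambda>y. Kmap k (X y)) (at x))"
proof -
  define P where "P = jacobian X (at x)"
  define Q where "Q = jacobian (\<lambda>y. Kmap k (X y)) (at x)"
  define r where "r = norm (X x)"
  define g where "g = k r / r"
  define b where "b = bfun k k' r"
  define E where "E = proj_along (sgn (X x)) P"
  have X0: "X x \<noteq> 0" and r: "r > 0"
    using X_nz[OF x_in] by (auto simp: r_def)
  have g: "g > 0" and b: "b > 0"
    using k_pos[OF r] r b_pos by (simp_all add: g_def b_def r_def)
  have "Q = g *\<^sub>R P + (k' r - g) *\<^sub>R E"
    using jacobian_Kmap_comp[OF X_diff[OF x_in] X0 k_deriv[OF r[unfolded r_def]]]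
    by (simp add: P_def Q_def E_def g_def r_def)
  also have "\<dots> = g *\<^sub>R (P + (b - 1) *\<^sub>R E)"
    using r k_pos[OF r] by (simp add: b_def bfun_def g_def algebra_simps)
  finally have Q_eq: "Q = g *\<^sub>R (P + (b - 1) *\<^sub>R E)" .
  have "E \<bullet> P = E \<bullet> E"
    using X0 by (simp add: E_def inner_proj_along norm_sgn)
  from mult_left_mono[OF inner_ge_add_projection[OF this b], where c = g]
  have "2 * sqrt b / (b + 1) * (norm P * norm Q) \<le> P \<bullet> Q"
    using g by (simp add: Q_eq mult_ac)
  moreover have "((lam / Lam\<^sup>2) *\<^sub>R (A ** P)) \<bullet> Q
                   \<ge> P \<bullet> Q - sqrt (1 - (lam / Lam)\<^sup>2) * norm P * norm Q"
    using A_ell[of P] A_bdd[of P] lam_pos lam_le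
    by (intro inner_scaled_ge) (simp_all add: frob_inner_eq_inner frob_norm_eq_norm)
  ultimately show ?thesis
    unfolding frob_inner_eq_inner frob_norm_eq_norm
    using sqrt_one_minus_square_ratio[OF b]
    by (simp add: P_def[symmetric] Q_def[symmetric] b_def r_def scalar_matrix_assoc algebra_simps)
qed

end
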